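(* Let $R$ be a commutative ring in which $2$ is invertible, let $Q$ be a quadratic space over $R$, let $m\ge 1$ and $M=Q\perp\mathbb{H}(R)^m$. Then $\mathrm{EO}_R(Q,\mathbb{H}(R)^m)=\mathrm{ETransO}(M)$.
   Context: A quadratic $R$-module $(Q,q)$ is a finitely generated projective $R$-module with a quadratic form $q$; its bilinear form is $\langle x,y\rangle=q(x+y)-q(x)-q(y)$ (so $\langle x,x\rangle=2q(x)$). It is a quadratic space if $z\mapsto\langle z,-\rangle$ is an isomorphism $Q\to Q^*$. For a finitely generated projective $P$, $\mathbb{H}(P)=P\oplus P^*$ with $q(y,g)=g(y)$, i.e. $\langle(y_1,g_1),(y_2,g_2)\rangle=g_2(y_1)+g_1(y_2)$; orthogonal sums carry the sum of the forms. $\mathbb{H}(R)^m=\mathbb{H}(R^m)$ with basis $x_1,\dots,x_m$ of $R^m$ and dual basis $f_1,\dots,f_m$ ($f_i(x_j)=\delta_{ij}$). DSER transformations on $Q\perp\mathbb{H}(P)$: for $R$-linear $\alpha:Q\to P$, let $\alpha^*:P^*\to Q$ be determined by $\langle\alpha^*(g),z\rangle=g(\alpha(z))$ for all $z\in Q$, and $E_\alpha(z,y,g)=(z-\alpha^*(g),\,y+\alpha(z)-\tfrac12\alpha\alpha^*(g),\,g)$; for $R$-linear $\beta:Q\to P^*$, let $\beta^*:P\to Q$ be determined by $\langle\beta^*(y),z\rangle=\beta(z)(y)$, and $E^*_\beta(z,y,g)=(z-\beta^*(y),\,y,\,g+\beta(z)-\tfrac12\beta\beta^*(y))$. $\mathrm{EO}_R(Q,\mathbb{H}(P))$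 is generated by all $E_\alpha,E^*_\beta$. Elementary orthogonal transvections on $M=Q\perp\mathbb{H}(R)^m$: for $w\in Q$ and $1\le i\le m$, writing elements as $(z,\sum_j a_jx_j+\sum_j b_jf_j)$, set $E^w_{1i}(z,\sum a_jx_j+\sum b_jf_j)=(z-b_iw,\ \sum a_jx_j+(\langle z,w\rangle-b_iq(w))x_i+\sum b_jf_j)$ and $E^w_{2i}(z,\sum a_jx_j+\sum b_jf_j)=(z-a_iw,\ \sum a_jx_j+\sum b_jf_j+(\langle z,w\rangle-a_iq(w))f_i)$. $\mathrm{ETransO}(M)$ is the group generated by all $E^w_{1i},E^w_{2i}$ ($w\in Q$, $1\le i\le m$). *)

theory Defs
  imports HOL.Modules "HOL-Algebra.Bij" "HOL-Algebra.Generated_Groups"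
begin

text \<open>R is a type 'r of class comm_ring_1; Q is a type 'q with an R-module
  structure given by the scalar multiplication s (Main's locale module).\<close>

definition lin_functional :: "('r::comm_ring_1 \<Rightarrow> 'q::ab_group_add \<Rightarrow> 'q) \<Rightarrow> ('q \<Rightarrow> 'r) \<Rightarrow> bool" where
  "lin_functional s f \<longleftrightarrow> Modules.module_hom s (*) f"

text \<open>Q is finitely generated projective: Q is a direct summand (retract) of some R^n,
  via an R-linear map i = (phi_0,...,phi_(n-1)) : Q to R^n and p : R^n to Q,
  p(c) = sum of c_k e_k, with p o i = id.\<close>
definition fg_projective :: "('r::comm_ring_1 \<Rightarrow> 'q::ab_group_add \<Rightarrow> 'q) \<Rightarrow> bool" where
  "fg_projective s \<longleftrightarrow> Modules.module s \<and>
     (\<exists>(n::nat) (phi :: nat \<Rightarrow> 'q \<Rightarrow> 'r) (e :: nat \<Rightarrow> 'q).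
        (\<forall>k<n. lin_functional s (phi k)) \<and> (\<forall>z. z = (\<Sum>k<n. s (phi k z) (e k))))"

definition polar :: "('q::ab_group_add \<Rightarrow> 'r::comm_ring_1) \<Rightarrow> 'q \<Rightarrow> 'q \<Rightarrow> 'r" where
  "polar q x y = q (x + y) - q x - q y"

definition quadratic_form :: "('r::comm_ring_1 \<Rightarrow> 'q::ab_group_add \<Rightarrow> 'q) \<Rightarrow> ('q \<Rightarrow> 'r) \<Rightarrow> bool" where
  "quadratic_form s q \<longleftrightarrow>
     (\<forall>a z. q (s a z) = a * a * q z) \<and>
     (\<forall>x. lin_functional s (polar q x)) \<and> (\<forall>y. lin_functional s (\<lambda>x. polar q x y))"

text \<open>(Q,q) is a quadratic space: Q f.g. projective, q a quadratic form, and
  z maps to <z,-> is a bijection Q to Q^* (it is automatically linear).\<close>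
definition quadratic_space :: "('r::comm_ring_1 \<Rightarrow> 'q::ab_group_add \<Rightarrow> 'q) \<Rightarrow> ('q \<Rightarrow> 'r) \<Rightarrow> bool" where
  "quadratic_space s q \<longleftrightarrow> fg_projective s \<and> quadratic_form s q \<and>
     inj (polar q) \<and> (\<forall>f. lin_functional s f \<longrightarrow> (\<exists>z. polar q z = f))"

text \<open>The element 1/2 of R (2 is assumed invertible).\<close>
definition half :: "'r::comm_ring_1" where
  "half = (THE h. h * 2 = 1)"

text \<open>M = Q \<perp> H(R)^m, with elements (z, a, b) standing for z + sum a_j x_j + sum b_j f_j;
  the index set {1..m} is represented by a finite type 'm, so m = CARD('m) \<ge> 1.
  P = R^m = ('m \<Rightarrow> 'r), and P^* is identified with R^m via the dual basis f_j,
  i.e. b corresponds to the functional y \<mapsto> sum_j b_j y_j.\<close>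
type_synonym ('q,'r,'m) Mspace = "'q \<times> ('m \<Rightarrow> 'r) \<times> ('m \<Rightarrow> 'r)"

text \<open>R-linear maps Q to P = R^m (resp. Q to P^*, also R^m in coordinates).\<close>
definition lin_to_free :: "('r::comm_ring_1 \<Rightarrow> 'q::ab_group_add \<Rightarrow> 'q) \<Rightarrow> ('q \<Rightarrow> 'm::finite \<Rightarrow> 'r) \<Rightarrow> bool" where
  "lin_to_free s \<alpha> \<longleftrightarrow> (\<forall>j. lin_functional s (\<lambda>z. \<alpha> z j))"

definition adj_alpha :: "('q::ab_group_add \<Rightarrow> 'r::comm_ring_1) \<Rightarrow> ('q \<Rightarrow> 'm::finite \<Rightarrow> 'r) \<Rightarrow> ('m \<Rightarrow> 'r) \<Rightarrow> 'q" where
  "adj_alpha q \<alpha> g = (THE w. \<forall>z. polar q w z = (\<Sum>j\<in>UNIV. g j * \<alpha> z j))"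

definition adj_beta :: "('q::ab_group_add \<Rightarrow> 'r::comm_ring_1) \<Rightarrow> ('q \<Rightarrow> 'm::finite \<Rightarrow> 'r) \<Rightarrow> ('m \<Rightarrow> 'r) \<Rightarrow> 'q" where
  "adj_beta q \<beta> y = (THE w. \<forall>z. polar q w z = (\<Sum>j\<in>UNIV. \<beta> z j * y j))"

definition E_alpha :: "('r::comm_ring_1 \<Rightarrow> 'q::ab_group_add \<Rightarrow> 'q) \<Rightarrow> ('q \<Rightarrow> 'r) \<Rightarrow> ('q \<Rightarrow> 'm::finite \<Rightarrow> 'r)
    \<Rightarrow> ('q,'r,'m) Mspace \<Rightarrow> ('q,'r,'m) Mspace" where
  "E_alpha s q \<alpha> = (\<lambda>(z, y, g).
      (z - adj_alpha q \<alpha> g,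
       (\<lambda>j. y j + \<alpha> z j - half * \<alpha> (adj_alpha q \<alpha> g) j),
       g))"

definition E_beta :: "('r::comm_ring_1 \<Rightarrow> 'q::ab_group_add \<Rightarrow> 'q) \<Rightarrow> ('q \<Rightarrow> 'r) \<Rightarrow> ('q \<Rightarrow> 'm::finite \<Rightarrow> 'r)
    \<Rightarrow> ('q,'r,'m) Mspace \<Rightarrow> ('q,'r,'m) Mspace" where
  "E_beta s q \<beta> = (\<lambda>(z, y, g).
      (z - adj_beta q \<beta> y,
       y,
       (\<lambda>j. g j + \<beta> z j - half * \<beta> (adj_beta q \<beta> y) j)))"

definition gen_perm_group :: "('a \<Rightarrow> 'a) set \<Rightarrow> ('a \<Rightarrow> 'a) set" where
  "gen_perm_group S = generate (BijGroup UNIV) S"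

definition EO :: "('r::comm_ring_1 \<Rightarrow> 'q::ab_group_add \<Rightarrow> 'q) \<Rightarrow> ('q \<Rightarrow> 'r)
    \<Rightarrow> (('q,'r,'m::finite) Mspace \<Rightarrow> ('q,'r,'m) Mspace) set" where
  "EO s q = gen_perm_group
     ({E_alpha s q \<alpha> | \<alpha>. lin_to_free s \<alpha>} \<union> {E_beta s q \<beta> | \<beta>. lin_to_free s \<beta>})"

definition E1 :: "('r::comm_ring_1 \<Rightarrow> 'q::ab_group_add \<Rightarrow> 'q) \<Rightarrow> ('q \<Rightarrow> 'r) \<Rightarrow> 'q \<Rightarrow> 'm
    \<Rightarrow> ('q,'r,'m) Mspace \<Rightarrow> ('q,'r,'m) Mspace" where
  "E1 s q w i = (\<lambda>(z, a, b).
      (z - s (b i) w, (\<lambda>j. a j + (if j = i then polar q z w - b i * q w else 0)), b))"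

definition E2 :: "('r::comm_ring_1 \<Rightarrow> 'q::ab_group_add \<Rightarrow> 'q) \<Rightarrow> ('q \<Rightarrow> 'r) \<Rightarrow> 'q \<Rightarrow> 'm
    \<Rightarrow> ('q,'r,'m) Mspace \<Rightarrow> ('q,'r,'m) Mspace" where
  "E2 s q w i = (\<lambda>(z, a, b).
      (z - s (a i) w, a, (\<lambda>j. b j + (if j = i then polar q z w - a i * q w else 0))))"

definition ETransO :: "('r::comm_ring_1 \<Rightarrow> 'q::ab_group_add \<Rightarrow> 'q) \<Rightarrow> ('q \<Rightarrow> 'r)
    \<Rightarrow> (('q,'r,'m::finite) Mspace \<Rightarrow> ('q,'r,'m) Mspace) set" where
  "ETransO s q = gen_perm_group ({E1 s q w i | w i. True} \<union> {E2 s q w i | w i. True})"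

end

theory Submission
  imports Defs
begin

text \<open>Every elementary transvection is a DSER transformation: E^w_1i is E_alpha for the rank-one
  map alpha = <-,w> x_i, and E^w_2i is E*_alpha for the same alpha. Conversely, when 2 is
  invertible, alpha \<mapsto> E_alpha satisfies E_0 = 1 and E_(alpha+beta) = E_(beta/2) E_alpha E_(beta/2).
  Writing alpha = \<Sum>_i alpha_i x_i and, Q being a quadratic space, each functional alpha_i/2 as
  <-,w_i>, this identity expresses E_alpha as a product of the transvections E^(w_i)_1i. With P^*
  identified with R^m, E*_beta is E_beta conjugated by the exchange of P and P^*, so the same
  argument applies to it. The identity also gives invertibility: E_beta E_(-2 beta) E_beta = E_0 = 1.\<close>

lemma half_mult_2_if_2_invertible:
  assumes "\<exists>h::'r::comm_ring_1. h * 2 = 1"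
  shows "(half::'r) * 2 = 1"
proof -
  obtain h :: 'r where h: "h * 2 = 1" using assms by blast
  have "h' = h" if "h' * 2 = 1" for h' :: 'r
  proof -
    have "h' = h' * (h * 2)" using h by simp
    also have "\<dots> = h * (h' * 2)" by (simp add: algebra_simps)
    finally show ?thesis using that by simp
  qed
  then have "half = h" unfolding half_def using h by (intro the_equality)
  with h show ?thesis by simp
qed

lemma module_mult: "Modules.module ((*) :: 'r::comm_ring_1 \<Rightarrow> 'r \<Rightarrow> 'r)"
  by unfold_locales (auto simp: algebra_simps)

lemma carrier_BijGroup_UNIV: "carrier (BijGroup UNIV) = {f. bij f}"
  by (simp add: BijGroup_def Bij_def)

lemma bij_if_comp_self_eq_id:
  assumes "f \<circ> g \<circ> f = id"
  shows "bij f"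
proof (rule bijI)
  show "inj f"
    using inj_on_imageI2[of "f \<circ> g" f UNIV] assms by simp
  show "surj f"
    using assms by (metis comp_apply id_apply surjI)
qed

lemma subgroup_BijGroup_UNIV_id:
  fixes K :: "('a \<Rightarrow> 'a) set"
  assumes "subgroup K (BijGroup UNIV)"
  shows "id \<in> K"
proof -
  have "\<one>\<^bsub>BijGroup (UNIV :: 'a set)\<^esub> = id" by (simp add: BijGroup_def fun_eq_iff)
  with subgroup.one_closed[OF assms] show ?thesis by simp
qed

lemma subgroup_BijGroup_UNIV_comp:
  assumes "subgroup K (BijGroup UNIV)" "f \<in> K" "g \<in> K"
  shows "f \<circ> g \<in> K"
proof -
  have "f \<in> Bij UNIV" "g \<in> Bij UNIV"
    using subgroup.subset[OF assms(1)] assms(2,3) by (auto simp: BijGroup_def)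
  then have "f \<otimes>\<^bsub>BijGroup UNIV\<^esub> g = f \<circ> g"
    by (simp add: BijGroup_def compose_def fun_eq_iff)
  with subgroup.m_closed[OF assms] show ?thesis by simp
qed

lemma lin_functional_add: "lin_functional s f \<Longrightarrow> f (x + y) = f x + f y"
  unfolding lin_functional_def by (rule module_hom.add)

lemma lin_functional_diff: "lin_functional s f \<Longrightarrow> f (x - y) = f x - f y"
  unfolding lin_functional_def by (rule module_hom.diff)

lemma lin_functional_scale: "lin_functional s f \<Longrightarrow> f (s c x) = c * f x"
  unfolding lin_functional_def by (rule module_hom.scale)

lemma lin_functional_zero: "lin_functional s f \<Longrightarrow> f 0 = 0"
  unfolding lin_functional_def by (rule module_hom.zero)

lemma lin_to_free_add_apply: "lin_to_free s \<alpha> \<Longrightarrow> \<alpha> (x + y) j = \<alpha> x j + \<alpha> y j"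
  unfolding lin_to_free_def by (rule lin_functional_add) blast

lemma lin_to_free_diff_apply: "lin_to_free s \<alpha> \<Longrightarrow> \<alpha> (x - y) j = \<alpha> x j - \<alpha> y j"
  unfolding lin_to_free_def by (rule lin_functional_diff) blast

lemma lin_to_free_scale_apply: "lin_to_free s \<alpha> \<Longrightarrow> \<alpha> (s c x) j = c * \<alpha> x j"
  unfolding lin_to_free_def by (rule lin_functional_scale) blast

lemma polar_commute: "polar q x y = polar q y x"
  unfolding polar_def by (simp add: add.commute)

lemma adj_beta_eq_adj_alpha: "adj_beta q = adj_alpha q"
  unfolding adj_beta_def adj_alpha_def by (simp add: mult.commute)

definition polar_coord :: "('q::ab_group_add \<Rightarrow> 'r::comm_ring_1) \<Rightarrow> 'q \<Rightarrow> 'm \<Rightarrow> 'q \<Rightarrow> 'm \<Rightarrow> 'r" where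
  "polar_coord q w i = (\<lambda>z j. if j = i then polar q z w else 0)"

definition swap_dual :: "('q, 'r, 'm) Mspace \<Rightarrow> ('q, 'r, 'm) Mspace" where
  "swap_dual = (\<lambda>(z, y, g). (z, g, y))"

lemma swap_dual_involution: "swap_dual \<circ> swap_dual = id"
  by (auto simp: swap_dual_def)

lemma E_beta_eq_swap_conj: "E_beta s q \<beta> = swap_dual \<circ> E_alpha s q \<beta> \<circ> swap_dual"
  by (auto simp: E_beta_def E_alpha_def swap_dual_def adj_beta_eq_adj_alpha)

lemma E2_eq_swap_conj: "E2 s q w i = swap_dual \<circ> E1 s q w i \<circ> swap_dual"
  by (auto simp: E2_def E1_def swap_dual_def)

definition palindromic ::
    "('r::comm_ring_1 \<Rightarrow> 'q::ab_group_add \<Rightarrow> 'q) \<Rightarrow> (('q \<Rightarrow> 'm::finite \<Rightarrow> 'r) \<Rightarrow> 'x \<Rightarrow> 'x) \<Rightarrow> bool" where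
  "palindromic s F \<longleftrightarrow> F (\<lambda>z j. 0) = id \<and>
     (\<forall>\<alpha> \<beta>. lin_to_free s \<alpha> \<longrightarrow> lin_to_free s \<beta> \<longrightarrow>
        F (\<lambda>z j. \<alpha> z j + \<beta> z j) = F (\<lambda>z j. half * \<beta> z j) \<circ> F \<alpha> \<circ> F (\<lambda>z j. half * \<beta> z j))"

lemma palindromic_conj:
  assumes "palindromic s F" and "c \<circ> c = id"
  shows "palindromic s (\<lambda>\<alpha>. c \<circ> F \<alpha> \<circ> c)"
proof -
  have "c (c x) = x" for x
    using assms(2) by (metis comp_apply id_apply)
  with assms(1) show ?thesis
    unfolding palindromic_def by (simp add: fun_eq_iff)
qed

locale quadratic_space_with_half =
  fixes s :: "'r::comm_ring_1 \<Rightarrow> 'q::ab_group_add \<Rightarrow> 'q" and q :: "'q \<Rightarrow> 'r"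
  assumes half_mult_2: "half * 2 = (1::'r)"
    and quadratic_space: "quadratic_space s q"
begin

sublocale module s
  using quadratic_space by (simp add: quadratic_space_def fg_projective_def)

lemma module_pair_mult: "module_pair s (*)"
  by (simp add: module_pair_def module_axioms module_mult)

lemma lin_to_free_scale: "lin_to_free s \<beta> \<Longrightarrow> lin_to_free s (\<lambda>z j. c * \<beta> z j)"
  unfolding lin_to_free_def lin_functional_def
  by (simp add: module_pair.module_hom_scale[OF module_pair_mult])

lemma lin_to_free_restrict:
  "lin_to_free s \<alpha> \<Longrightarrow> lin_to_free s (\<lambda>z j. if j \<in> S then \<alpha> z j else 0)"
  unfolding lin_to_free_def
proof (intro allI)
  fix j assume "\<forall>j. lin_functional s (\<lambda>z. \<alpha> z j)"
  then show "lin_functional s (\<lambda>z. if j \<in> S then \<alpha> z j else 0)"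
    by (cases "j \<in> S")
      (simp_all add: lin_functional_def module_pair.module_hom_zero[OF module_pair_mult])
qed

lemma lin_functional_polar_left: "lin_functional s (\<lambda>x. polar q x y)"
  using quadratic_space unfolding quadratic_space_def quadratic_form_def by blast

lemma lin_to_free_polar_coord: "lin_to_free s (polar_coord q w i)"
proof -
  have "lin_to_free s (\<lambda>z j. polar q z w)"
    unfolding lin_to_free_def using lin_functional_polar_left by blast
  from lin_to_free_restrict[OF this, of "{i}"] show ?thesis
    by (simp add: polar_coord_def)
qed

lemma polar_add_left: "polar q (x + y) z = polar q x z + polar q y z"
  by (rule lin_functional_add[OF lin_functional_polar_left])

lemma polar_scale_left: "polar q (s c x) z = c * polar q x z"
  by (rule lin_functional_scale[OF lin_functional_polar_left])

lemma polar_zero_left: "polar q 0 z = 0"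
  by (rule lin_functional_zero[OF lin_functional_polar_left])

lemma polar_self: "polar q w w = 2 * q w"
proof -
  have "q (s 2 w) = 2 * 2 * q w"
    using quadratic_space unfolding quadratic_space_def quadratic_form_def by blast
  moreover have "s 2 w = w + w"
    using scale_left_distrib[of 1 1 w] by simp
  ultimately show ?thesis
    unfolding polar_def by (simp add: algebra_simps)
qed

lemma polar_eqI: "(\<And>z. polar q w z = polar q w' z) \<Longrightarrow> w = w'"
  using quadratic_space unfolding quadratic_space_def inj_def by blast

lemma polar_represents: "lin_functional s f \<Longrightarrow> \<exists>w. \<forall>z. polar q w z = f z"
  using quadratic_space unfolding quadratic_space_def by metis

lemma lin_functional_pairing:
  "lin_to_free s \<alpha> \<Longrightarrow> lin_functional s (\<lambda>z. \<Sum>j\<in>UNIV. g j * \<alpha> z j)"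
  unfolding lin_to_free_def lin_functional_def
  by (intro module_pair.module_hom_sum[OF module_pair_mult]
      module_pair.module_hom_scale[OF module_pair_mult])
    (auto simp: module_axioms module_mult)

lemma adj_alpha_eqI:
  "(\<And>z. polar q w z = (\<Sum>j\<in>UNIV. g j * \<alpha> z j)) \<Longrightarrow> adj_alpha q \<alpha> g = w"
  unfolding adj_alpha_def by (rule the_equality) (auto intro: polar_eqI)

lemma polar_adj_alpha:
  assumes "lin_to_free s \<alpha>"
  shows "polar q (adj_alpha q \<alpha> g) z = (\<Sum>j\<in>UNIV. g j * \<alpha> z j)"
proof -
  obtain w where w: "\<And>z. polar q w z = (\<Sum>j\<in>UNIV. g j * \<alpha> z j)"
    using polar_represents[OF lin_functional_pairing[OF assms]] by blast
  then have "adj_alpha q \<alpha> g = w" by (rule adj_alpha_eqI)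
  with w show ?thesis by simp
qed

lemma adj_alpha_add:
  assumes "lin_to_free s \<alpha>" "lin_to_free s \<beta>"
  shows "adj_alpha q (\<lambda>z j. \<alpha> z j + \<beta> z j) g = adj_alpha q \<alpha> g + adj_alpha q \<beta> g"
  by (rule adj_alpha_eqI)
    (simp add: polar_add_left polar_adj_alpha[OF assms(1)] polar_adj_alpha[OF assms(2)]
      distrib_left sum.distrib)

lemma adj_alpha_scale:
  assumes "lin_to_free s \<beta>"
  shows "adj_alpha q (\<lambda>z j. c * \<beta> z j) g = s c (adj_alpha q \<beta> g)"
  by (rule adj_alpha_eqI)
    (simp add: polar_scale_left polar_adj_alpha[OF assms] sum_distrib_left mult_ac)

lemma adj_alpha_zero: "adj_alpha q (\<lambda>z j. 0) g = 0"
  by (rule adj_alpha_eqI) (simp add: polar_zero_left)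

lemma adj_alpha_polar_coord: "adj_alpha q (polar_coord q w i) g = s (g i) w"
  by (rule adj_alpha_eqI)
    (simp add: polar_coord_def polar_scale_left polar_commute[of q _ w] if_distrib cong: if_cong)

lemma E_alpha_zero: "E_alpha s q (\<lambda>z j. 0) = id"
  by (auto simp: E_alpha_def adj_alpha_zero)

lemma E_alpha_add:
  assumes \<alpha>: "lin_to_free s \<alpha>" and \<beta>: "lin_to_free s \<beta>"
  shows "E_alpha s q (\<lambda>z j. \<alpha> z j + \<beta> z j)
       = E_alpha s q (\<lambda>z j. half * \<beta> z j) \<circ> E_alpha s q \<alpha> \<circ> E_alpha s q (\<lambda>z j. half * \<beta> z j)"
proof (intro ext, clarify)
  fix z y g
  define A B where "A = adj_alpha q \<alpha> g" and "B = adj_alpha q \<beta> g"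
  have "s half B + s half B = B"
    using scale_left_distrib[of half half B] half_mult_2
    by (simp add: mult_2_right[symmetric] mult.commute)
  then have z: "z - s half B - A - s half B = z - (A + B)"
    by (simp add: algebra_simps)
  have y: "y j + half * \<beta> z j - half * (half * \<beta> (s half B) j) + \<alpha> (z - s half B) j
      - half * \<alpha> A j + half * \<beta> (z - s half B - A) j - half * (half * \<beta> (s half B) j)
    = y j + (\<alpha> z j + \<beta> z j) - half * (\<alpha> (A + B) j + \<beta> (A + B) j)" (is "?l = ?r") for j
  proof -
    have "?l - ?r = (half * 2 - 1) * (\<beta> z j - half * (half + 1) * \<beta> B j)"
      by (simp add: lin_to_free_add_apply[OF \<alpha>] lin_to_free_add_apply[OF \<beta>]
          lin_to_free_diff_apply[OF \<alpha>] lin_to_free_diff_apply[OF \<beta>]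
          lin_to_free_scale_apply[OF \<alpha>] lin_to_free_scale_apply[OF \<beta>] algebra_simps)
    with half_mult_2 show ?thesis
      by (simp only: diff_self mult_zero_left right_minus_eq)
  qed
  show "E_alpha s q (\<lambda>z j. \<alpha> z j + \<beta> z j) (z, y, g) =
    (E_alpha s q (\<lambda>z j. half * \<beta> z j) \<circ> E_alpha s q \<alpha> \<circ> E_alpha s q (\<lambda>z j. half * \<beta> z j)) (z, y, g)"
    unfolding E_alpha_def comp_apply prod.case
    by (simp only: adj_alpha_add[OF \<alpha> \<beta>] adj_alpha_scale[OF \<beta>] z y flip: A_def B_def)
qed

lemma palindromic_E_alpha: "palindromic s (E_alpha s q)"
  unfolding palindromic_def using E_alpha_zero E_alpha_add by blast

lemma E1_eq_E_alpha: "E1 s q w i = E_alpha s q (polar_coord q w i)"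
proof (intro ext, clarify)
  fix z a b
  have "half * (b i * (2 * q w)) = b i * q w"
    using half_mult_2 by (metis mult.commute mult.left_commute mult_1_right)
  then show "E1 s q w i (z, a, b) = E_alpha s q (polar_coord q w i) (z, a, b)"
    unfolding E_alpha_def prod.case adj_alpha_polar_coord
    by (auto simp: E1_def polar_coord_def polar_scale_left polar_self)
qed

lemma palindromic_E_beta: "palindromic s (E_beta s q)"
  using palindromic_conj[OF palindromic_E_alpha swap_dual_involution]
  by (simp add: E_beta_eq_swap_conj[abs_def])

lemma E2_eq_E_beta: "E2 s q w i = E_beta s q (polar_coord q w i)"
  by (simp add: E2_eq_swap_conj E1_eq_E_alpha E_beta_eq_swap_conj)

lemma palindromic_bij:
  assumes F: "palindromic s F" and \<beta>: "lin_to_free s \<beta>"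
  shows "bij (F \<beta>)"
proof (rule bij_if_comp_self_eq_id)
  have F0: "F (\<lambda>z j. 0) = id" and Fadd: "\<And>\<alpha> \<gamma>. lin_to_free s \<alpha> \<Longrightarrow> lin_to_free s \<gamma> \<Longrightarrow>
      F (\<lambda>z j. \<alpha> z j + \<gamma> z j) = F (\<lambda>z j. half * \<gamma> z j) \<circ> F \<alpha> \<circ> F (\<lambda>z j. half * \<gamma> z j)"
    using F unfolding palindromic_def by blast+
  have "id = F (\<lambda>z j. (- 2) * \<beta> z j + 2 * \<beta> z j)"
    using F0 by simp
  also have "\<dots> = F (\<lambda>z j. half * (2 * \<beta> z j)) \<circ> F (\<lambda>z j. (- 2) * \<beta> z j) \<circ> F (\<lambda>z j. half * (2 * \<beta> z j))"
    using Fadd lin_to_free_scale[OF \<beta>] by blast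
  also have "(\<lambda>z j. half * (2 * \<beta> z j)) = \<beta>"
    using half_mult_2 by (simp add: mult.assoc[symmetric])
  finally show "F \<beta> \<circ> F (\<lambda>z j. (- 2) * \<beta> z j) \<circ> F \<beta> = id" ..
qed

lemma palindromic_in_subgroup:
  assumes F: "palindromic s F" and K: "subgroup K (BijGroup UNIV)"
    and gens: "\<And>w i. F (polar_coord q w i) \<in> K" and \<alpha>: "lin_to_free s \<alpha>"
  shows "F \<alpha> \<in> K"
proof -
  have "F (\<lambda>z j. if j \<in> S then \<alpha> z j else 0) \<in> K" if "finite S" for S
    using that
  proof (induction S rule: finite_induct)
    case empty
    from F have "F (\<lambda>z j. if j \<in> {} then \<alpha> z j else 0) = id"
      by (simp add: palindromic_def)
    with subgroup_BijGroup_UNIV_id[OF K] show ?case by (simp only:)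
  next
    case (insert k S)
    have "lin_functional s (\<lambda>z. half * \<alpha> z k)"
      using lin_to_free_scale[OF \<alpha>] unfolding lin_to_free_def by blast
    then obtain w where w: "\<And>z. polar q w z = half * \<alpha> z k"
      using polar_represents by blast
    have split: "(\<lambda>z j. if j \<in> insert k S then \<alpha> z j else 0)
        = (\<lambda>z j. (if j \<in> S then \<alpha> z j else 0) + (if j \<in> {k} then \<alpha> z j else 0))"
      using insert.hyps(2) by (auto simp: fun_eq_iff)
    have half_k: "(\<lambda>z j. half * (if j \<in> {k} then \<alpha> z j else 0)) = polar_coord q w k"
      by (auto simp: fun_eq_iff polar_coord_def w polar_commute[of q _ w])
    have "F (\<lambda>z j. if j \<in> insert k S then \<alpha> z j else 0)
        = F (polar_coord q w k) \<circ> F (\<lambda>z j. if j \<in> S then \<alpha> z j else 0) \<circ> F (polar_coord q w k)"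
      using F lin_to_free_restrict[OF \<alpha>] unfolding palindromic_def split half_k[symmetric] by blast
    with subgroup_BijGroup_UNIV_comp[OF K subgroup_BijGroup_UNIV_comp[OF K gens insert.IH] gens]
    show ?case by (simp only:)
  qed
  from this[of UNIV] show ?thesis by simp
qed

end

theorem mainTheorem2:
  fixes s :: "'r::comm_ring_1 \<Rightarrow> 'q::ab_group_add \<Rightarrow> 'q"
    and q :: "'q \<Rightarrow> 'r"
  assumes "\<exists>h::'r. h * 2 = 1"
    and "quadratic_space s q"
  shows "(EO s q :: (('q,'r,'m::finite) Mspace \<Rightarrow> ('q,'r,'m) Mspace) set) = ETransO s q"
proof -
  interpret quadratic_space_with_half s q
    using assms half_mult_2_if_2_invertible by unfold_locales blast+
  let ?G = "BijGroup (UNIV :: ('q,'r,'m) Mspace set)"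
  let ?DSER = "{E_alpha s q \<alpha> | \<alpha>. lin_to_free s \<alpha>} \<union> {E_beta s q \<beta> | \<beta>. lin_to_free s \<beta>}"
  let ?Trans = "{E1 s q w i | w i. True} \<union> {E2 s q w i | w i. True}"
  have Trans_DSER: "?Trans \<subseteq> ?DSER"
    unfolding E1_eq_E_alpha E2_eq_E_beta using lin_to_free_polar_coord by blast
  have "?Trans \<subseteq> carrier ?G"
    unfolding E1_eq_E_alpha E2_eq_E_beta carrier_BijGroup_UNIV
    using palindromic_bij[OF palindromic_E_alpha] palindromic_bij[OF palindromic_E_beta]
      lin_to_free_polar_coord by blast
  then have sub: "subgroup (generate ?G ?Trans) ?G"
    by (rule group.generate_is_subgroup[OF group_BijGroup])
  have "E_alpha s q (polar_coord q w i) \<in> generate ?G ?Trans"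
    "E_beta s q (polar_coord q w i) \<in> generate ?G ?Trans" for w i
    unfolding E1_eq_E_alpha[symmetric] E2_eq_E_beta[symmetric] by (blast intro: generate.incl)+
  then have "?DSER \<subseteq> generate ?G ?Trans"
    using palindromic_in_subgroup[OF palindromic_E_alpha sub]
      palindromic_in_subgroup[OF palindromic_E_beta sub] by blast
  then have "generate ?G ?DSER \<subseteq> generate ?G ?Trans"
    by (rule group.generate_subgroup_incl[OF group_BijGroup _ sub])
  moreover have "generate ?G ?Trans \<subseteq> generate ?G ?DSER"
    by (rule group.mono_generate[OF group_BijGroup Trans_DSER])
  ultimately show ?thesis
    unfolding EO_def ETransO_def gen_perm_group_def by blast
qed

end
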